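(* Let $a_{12},d>0$ and consider the rectangle with vertices $A_1'=(-a_{12}/2,\,d)$, $A_2'=(a_{12}/2,\,d)$, $A_4=(-a_{12}/2,\,0)$, $A_3=(a_{12}/2,\,0)$; let $M_{12}=(0,d)$, $M_{34}=(0,0)$. Let $F$ be the intersection of the diagonals $A_1'A_3$, $A_2'A_4$ and $\theta=\angle A_1'FA_2'$, and assume $\theta<90^\circ$. Let $F_{12}$ be the orthocenter of triangle $A_1'FA_2'$, $F_{34}$ the orthocenter of triangle $A_4FA_3$, $w(\theta)=2\sin\frac{\theta}{2}$, and $O_{12},O_{34}$ the points on segment $M_{12}M_{34}$ with $\angle A_1'O_{12}A_2'=\angle A_4O_{34}A_3=120^\circ$. Then $$2|A_1'F_{12}|+2|A_3F_{34}|+w(\theta)|F_{12}F_{34}|=4a_{12}\cos\frac{\theta}{2}$$ and $$2|A_1'O_{12}|+2|A_3O_{34}|+|O_{12}O_{34}|=a_{12}\left(\sqrt{3}+\frac{\cos\frac{\theta}{2}}{\sin\frac{\theta}{2}}\right).$$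
   Context: $|XY|$ denotes Euclidean distance. This is the case $a_{34}=a_{12}$ of an isosceles trapezium with parallel sides $A_1'A_2'$ (length $a_{12}$) and $A_4A_3$ (length $a_{34}$) at distance $d$. *)

theory Defs
  imports "HOL-Analysis.Analysis"
begin

definition vangle :: "real \<times> real \<Rightarrow> real \<times> real \<Rightarrow> real" where
  "vangle u v = (if u = 0 \<or> v = 0 then pi / 2 else arccos (inner u v / (norm u * norm v)))"

definition angle :: "real \<times> real \<Rightarrow> real \<times> real \<Rightarrow> real \<times> real \<Rightarrow> real" where
  "angle a b c = vangle (a - b) (c - b)"

definition is_orthocenter :: "real \<times> real \<Rightarrow> real \<times> real \<Rightarrow> real \<times> real \<Rightarrow> real \<times> real \<Rightarrow> bool" where
  "is_orthocenter H A B C \<longleftrightarrow>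
     inner (H - A) (B - C) = 0 \<and> inner (H - B) (C - A) = 0 \<and> inner (H - C) (A - B) = 0"

end

theory Submission
  imports Defs
begin

(* Everything is symmetric about the axis x = 0.  The diagonals meet at the centre F = (0, d/2),
   and in an isosceles triangle with apex P and legs P + (-b, k), P + (b, k) the half apex angle
   has cosine |k| / leg and sine |b| / leg.  Hence cos (theta/2) = d / sqrt (a^2 + d^2) and
   sin (theta/2) = a / sqrt (a^2 + d^2), so theta < 90 degrees means a < d, and a 120-degree apex
   over a base of length a lies at distance a / (2 sqrt 3) from it.  The orthocenters lie on the
   axis at heights d - a^2/(2d) and a^2/(2d), and both identities reduce to algebra in a and d. *)

lemma angle_nonneg: "0 \<le> angle A P B"
proof (cases "A = P \<or> B = P")
  case False
  define c where "c = inner (A - P) (B - P) / (norm (A - P) * norm (B - P))"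
  have "\<bar>c\<bar> \<le> 1"
    using False by (simp add: c_def abs_divide divide_le_eq_1 Cauchy_Schwarz_ineq2)
  then have "0 \<le> arccos c"
    by (simp add: abs_le_iff arccos_lbound)
  then show ?thesis
    using False by (simp add: angle_def vangle_def c_def)
qed (auto simp: angle_def vangle_def)

lemma half_angle_isosceles:
  fixes b k :: real
  assumes A: "A = P + (- b, k)" and B: "B = P + (b, k)" and nz: "(b, k) \<noteq> 0"
  shows "cos (angle A P B / 2) = \<bar>k\<bar> / dist A P"
    and "sin (angle A P B / 2) = \<bar>b\<bar> / dist A P"
proof -
  define \<theta> where "\<theta> = angle A P B"
  define r where "r = dist A P"
  have r: "r\<^sup>2 = b\<^sup>2 + k\<^sup>2"
    by (simp add: r_def A dist_norm norm_Pair)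
  have r_pos: "r > 0"
    using nz by (simp add: r_def A dist_norm zero_prod_def)
  have "norm (- b, k) = r" "norm (b, k) = r"
    by (simp_all add: r_def A dist_norm norm_Pair)
  then have "inner (- b, k) (b, k) / (norm (- b, k) * norm (b, k)) = (k\<^sup>2 - b\<^sup>2) / r\<^sup>2"
    by (simp add: power2_eq_square)
  moreover have "(- b, k) \<noteq> 0"
    using nz by (simp add: zero_prod_def)
  ultimately have "\<theta> = arccos ((k\<^sup>2 - b\<^sup>2) / r\<^sup>2)"
    using nz by (simp add: \<theta>_def angle_def vangle_def A B)
  moreover have "-1 \<le> (k\<^sup>2 - b\<^sup>2) / r\<^sup>2" "(k\<^sup>2 - b\<^sup>2) / r\<^sup>2 \<le> 1"
    using r_pos by (auto simp: r[symmetric] divide_le_eq le_divide_eq) (simp_all add: r)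
  ultimately have cos_\<theta>: "cos \<theta> = (k\<^sup>2 - b\<^sup>2) / r\<^sup>2" and "0 \<le> \<theta>" "\<theta> \<le> pi"
    by (simp_all add: arccos_lbound arccos_ubound)
  then have "0 \<le> \<theta> / 2" "\<theta> / 2 \<le> pi / 2"
    by simp_all
  then have nonneg: "0 \<le> cos (\<theta> / 2)" "0 \<le> sin (\<theta> / 2)"
    by (auto intro: cos_ge_zero sin_ge_zero)
  have "(cos (\<theta> / 2))\<^sup>2 = (1 + cos \<theta>) / 2"
    using cos_double_cos[of "\<theta> / 2"] by simp
  also have "\<dots> = (\<bar>k\<bar> / r)\<^sup>2"
    using r_pos nz by (auto simp: cos_\<theta> r power_divide divide_simps zero_prod_def)
  finally have "(cos (\<theta> / 2))\<^sup>2 = (\<bar>k\<bar> / r)\<^sup>2" .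
  then show "cos (\<theta> / 2) = \<bar>k\<bar> / r"
    using nonneg r_pos by (simp add: power2_eq_iff_nonneg)
  have "(sin (\<theta> / 2))\<^sup>2 = (1 - cos \<theta>) / 2"
    using cos_double_sin[of "\<theta> / 2"] by simp
  also have "\<dots> = (\<bar>b\<bar> / r)\<^sup>2"
    using r_pos nz by (auto simp: cos_\<theta> r power_divide divide_simps zero_prod_def)
  finally have "(sin (\<theta> / 2))\<^sup>2 = (\<bar>b\<bar> / r)\<^sup>2" .
  then show "sin (\<theta> / 2) = \<bar>b\<bar> / r"
    using nonneg r_pos by (simp add: power2_eq_iff_nonneg)
qed

lemma orthocenter_isosceles:
  fixes b k :: real
  assumes "is_orthocenter H (P + (- b, k)) P (P + (b, k))" and "b \<noteq> 0" and "k \<noteq> 0"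
  shows "H = P + (0, k - b\<^sup>2 / k)"
proof -
  obtain x y where H: "H = P + (x, y)"
    by (metis add_diff_cancel_left' diff_add_cancel surj_pair)
  have "(x + b) * b + (y - k) * k = 0" and "x * b = 0"
    using assms(1) by (simp_all add: is_orthocenter_def H algebra_simps)
  then have "x = 0" and "y = k - b\<^sup>2 / k"
    using assms(2,3) by (simp_all add: field_simps power2_eq_square)
  then show ?thesis
    by (simp add: H)
qed

lemma isosceles_120_height:
  fixes b k :: real
  assumes A: "A = P + (- b, k)" and B: "B = P + (b, k)" and "b > 0"
    and "angle A P B = 2 * pi / 3"
  shows "\<bar>k\<bar> = b / sqrt 3"
proof -
  have nz: "(b, k) \<noteq> 0"
    using \<open>b > 0\<close> by (simp add: zero_prod_def)
  have "1 / 2 = cos (angle A P B / 2)"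
    unfolding assms(4) by (simp add: cos_60)
  also have "\<dots> = \<bar>k\<bar> / dist A P"
    by (rule half_angle_isosceles(1)[OF A B nz])
  finally have cos: "1 / 2 = \<bar>k\<bar> / dist A P" .
  have "sqrt 3 / 2 = sin (angle A P B / 2)"
    unfolding assms(4) by (simp add: sin_60)
  also have "\<dots> = b / dist A P"
    using half_angle_isosceles(2)[OF A B nz] \<open>b > 0\<close> by simp
  finally have sin: "sqrt 3 / 2 = b / dist A P" .
  from cos have "k \<noteq> 0" and "dist A P \<noteq> 0"
    by auto
  with cos sin show ?thesis
    by (simp add: field_simps)
qed

lemma dist_Pair_eqI:
  fixes x1 y1 x2 y2 c :: real
  assumes "(x1 - x2)\<^sup>2 + (y1 - y2)\<^sup>2 = c\<^sup>2" and "0 \<le> c"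
  shows "dist (x1, y1) (x2, y2) = c"
  using assms by (simp add: dist_Pair_Pair dist_real_def)

lemma rectangle_diagonals_meet:
  fixes a d :: real
  assumes "a \<noteq> 0" and "d \<noteq> 0"
    and "F \<in> closed_segment (- a / 2, d) (a / 2, 0) \<inter> closed_segment (a / 2, d) (- a / 2, 0)"
  shows "F = (0, d / 2)"
proof -
  obtain u v where
    u: "F = (1 - u) *\<^sub>R (- a / 2, d) + u *\<^sub>R (a / 2, 0)" and
    v: "F = (1 - v) *\<^sub>R (a / 2, d) + v *\<^sub>R (- a / 2, 0)"
    using assms(3) unfolding closed_segment_def by blast
  then have "(1 - u) * d = (1 - v) * d"
    and "(1 - u) * (- a / 2) + u * (a / 2) = (1 - v) * (a / 2) + v * (- a / 2)"
    by (auto simp: prod_eq_iff)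
  then have "u = 1 / 2"
    using assms(1,2) by (simp add: field_simps)
  then show ?thesis
    using u by simp
qed

lemma rectangle_half_angle:
  fixes a d :: real
  assumes "a > 0" and "d > 0"
  defines "\<theta> \<equiv> angle (- a / 2, d) (0, d / 2) (a / 2, d)"
  shows "cos (\<theta> / 2) = d / sqrt (a\<^sup>2 + d\<^sup>2)" and "sin (\<theta> / 2) = a / sqrt (a\<^sup>2 + d\<^sup>2)"
proof -
  have legs: "(- a / 2, d) = (0, d / 2) + (- (a / 2), d / 2)" "(a / 2, d) = (0, d / 2) + (a / 2, d / 2)"
    by simp_all
  have "dist (- a / 2, d) (0, d / 2) = sqrt (a\<^sup>2 + d\<^sup>2) / 2"
    by (rule dist_Pair_eqI) (simp_all add: power_divide)
  moreover have "(a / 2, d / 2) \<noteq> 0"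
    using assms by (simp add: zero_prod_def)
  ultimately show "cos (\<theta> / 2) = d / sqrt (a\<^sup>2 + d\<^sup>2)" "sin (\<theta> / 2) = a / sqrt (a\<^sup>2 + d\<^sup>2)"
    using half_angle_isosceles[OF legs] assms by (simp_all add: \<theta>_def)
qed

lemma rectangle_orthocenters:
  fixes a d :: real
  assumes "a \<noteq> 0" and "d \<noteq> 0"
    and "is_orthocenter F12 (- a / 2, d) (0, d / 2) (a / 2, d)"
    and "is_orthocenter F34 (- a / 2, 0) (0, d / 2) (a / 2, 0)"
  shows "F12 = (0, d - a\<^sup>2 / (2 * d))" and "F34 = (0, a\<^sup>2 / (2 * d))"
proof -
  have "is_orthocenter F12 ((0, d / 2) + (- (a / 2), d / 2)) (0, d / 2) ((0, d / 2) + (a / 2, d / 2))"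
    using assms(3) by simp
  from orthocenter_isosceles[OF this] show "F12 = (0, d - a\<^sup>2 / (2 * d))"
    using assms(1,2) by (simp add: power_divide field_simps)
  have "is_orthocenter F34 ((0, d / 2) + (- (a / 2), - d / 2)) (0, d / 2) ((0, d / 2) + (a / 2, - d / 2))"
    using assms(4) by simp
  from orthocenter_isosceles[OF this] show "F34 = (0, a\<^sup>2 / (2 * d))"
    using assms(1,2) by (simp add: power_divide field_simps)
qed

lemma rectangle_orthocenter_identity:
  fixes a d :: real
  assumes "0 < a" and "a < d"
  defines "r \<equiv> sqrt (a\<^sup>2 + d\<^sup>2)"
  shows "2 * dist (- a / 2, d) (0, d - a\<^sup>2 / (2 * d)) + 2 * dist (a / 2, 0) (0, a\<^sup>2 / (2 * d))
           + 2 * (a / r) * dist (0 :: real, d - a\<^sup>2 / (2 * d)) (0, a\<^sup>2 / (2 * d))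
         = 4 * a * (d / r)"
proof -
  have r: "r\<^sup>2 = a\<^sup>2 + d\<^sup>2" and "r > 0"
    using assms(1) by (simp_all add: r_def add_pos_nonneg)
  have legs: "dist (- a / 2, d) (0, d - a\<^sup>2 / (2 * d)) = a * r / (2 * d)"
    "dist (a / 2, 0) (0, a\<^sup>2 / (2 * d)) = a * r / (2 * d)"
    using assms(1,2) \<open>r > 0\<close>
    by (rule_tac dist_Pair_eqI; simp add: power_divide power_mult_distrib r field_simps)+
  have base: "dist (0 :: real, d - a\<^sup>2 / (2 * d)) (0, a\<^sup>2 / (2 * d)) = d - a\<^sup>2 / d"
  proof (rule dist_Pair_eqI)
    have "a\<^sup>2 < d\<^sup>2"
      using assms(1,2) by (simp add: power_strict_mono)
    then show "0 \<le> d - a\<^sup>2 / d"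
      using assms(1,2) by (simp add: field_simps power2_eq_square)
  qed (simp add: field_simps)
  have "2 * (a * r / (2 * d)) + 2 * (a * r / (2 * d)) + 2 * (a / r) * (d - a\<^sup>2 / d)
      = 2 * a * (r\<^sup>2 + d\<^sup>2 - a\<^sup>2) / (r * d)"
    using assms(1,2) \<open>r > 0\<close> by (simp add: field_simps power2_eq_square)
  also have "\<dots> = 4 * a * (d / r)"
    unfolding r using assms(1,2) \<open>r > 0\<close> by (simp add: field_simps power2_eq_square)
  finally show ?thesis
    unfolding legs base .
qed

lemma rectangle_steiner_identity:
  fixes a d :: real
  assumes "0 < a" and "a \<le> sqrt 3 * d"
  defines "s \<equiv> a / (2 * sqrt 3)"
  shows "2 * dist (- a / 2, d) (0, d - s) + 2 * dist (a / 2, 0) (0, s) + dist (0 :: real, d - s) (0, s)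
         = sqrt 3 * a + d"
proof -
  have legs: "dist (- a / 2, d) (0, d - s) = 2 * s" "dist (a / 2, 0) (0, s) = 2 * s"
    using assms(1) by (rule_tac dist_Pair_eqI; simp add: s_def power_divide power_mult_distrib)+
  have base: "dist (0 :: real, d - s) (0, s) = d - 2 * s"
  proof (rule dist_Pair_eqI)
    show "0 \<le> d - 2 * s"
      using assms(2) by (simp add: s_def field_simps)
  qed (simp add: power2_eq_square algebra_simps)
  show ?thesis
    unfolding legs base by (simp add: s_def field_simps)
qed

lemma rectangle_steiner_points:
  fixes a d :: real
  assumes "0 < a" and "0 \<le> d"
    and "O12 \<in> closed_segment (0, d) (0, 0)" and "angle (- a / 2, d) O12 (a / 2, d) = 2 * pi / 3"
    and "O34 \<in> closed_segment (0, d) (0, 0)" and "angle (- a / 2, 0) O34 (a / 2, 0) = 2 * pi / 3"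
  shows "O12 = (0, d - a / (2 * sqrt 3))" and "O34 = (0, a / (2 * sqrt 3))"
proof -
  have axis: "closed_segment (0 :: real, d) (0, 0) = {0} \<times> {0..d}"
    using assms(2) by (simp add: closed_segment_same_fst closed_segment_eq_real_ivl)
  obtain y1 where O12: "O12 = (0, y1)" and "y1 \<le> d"
    using assms(3) axis by auto
  have "(- a / 2, d) = O12 + (- (a / 2), d - y1)" and "(a / 2, d) = O12 + (a / 2, d - y1)"
    by (simp_all add: O12)
  from isosceles_120_height[OF this] have "\<bar>d - y1\<bar> = a / 2 / sqrt 3"
    using assms(1,4) by simp
  with \<open>y1 \<le> d\<close> show "O12 = (0, d - a / (2 * sqrt 3))"
    by (simp add: O12)
  obtain y2 where O34: "O34 = (0, y2)" and "0 \<le> y2"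
    using assms(5) axis by auto
  have "(- a / 2, 0) = O34 + (- (a / 2), - y2)" and "(a / 2, 0) = O34 + (a / 2, - y2)"
    by (simp_all add: O34)
  from isosceles_120_height[OF this] have "\<bar>- y2\<bar> = a / 2 / sqrt 3"
    using assms(1,6) by simp
  with \<open>0 \<le> y2\<close> show "O34 = (0, a / (2 * sqrt 3))"
    by (simp add: O34)
qed

theorem corollary1:
  fixes a12 d :: real
    and A1' A2' A3 A4 M12 M34 F F12 F34 O12 O34 :: "real \<times> real"
    and \<theta> :: real and w :: "real \<Rightarrow> real"
  assumes "a12 > 0" and "d > 0"
    and "A1' = (- a12 / 2, d)" and "A2' = (a12 / 2, d)"
    and "A4 = (- a12 / 2, 0)" and "A3 = (a12 / 2, 0)"
    and "M12 = (0, d)" and "M34 = (0, 0)"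
    and "F \<in> closed_segment A1' A3 \<inter> closed_segment A2' A4"
    and "\<theta> = angle A1' F A2'"
    and "\<theta> < pi / 2"
    and "is_orthocenter F12 A1' F A2'"
    and "is_orthocenter F34 A4 F A3"
    and "w = (\<lambda>t. 2 * sin (t / 2))"
    and "O12 \<in> closed_segment M12 M34" and "angle A1' O12 A2' = 2 * pi / 3"
    and "O34 \<in> closed_segment M12 M34" and "angle A4 O34 A3 = 2 * pi / 3"
  shows "(2 * dist A1' F12 + 2 * dist A3 F34 + w \<theta> * dist F12 F34 = 4 * a12 * cos (\<theta> / 2)) \<and>
         (2 * dist A1' O12 + 2 * dist A3 O34 + dist O12 O34
           = a12 * (sqrt 3 + cos (\<theta> / 2) / sin (\<theta> / 2)))"
proof -
  note vertices = assms(3-8)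
  have F: "F = (0, d / 2)"
    by (rule rectangle_diagonals_meet[of a12 d]) (use assms(1,2,9) vertices in auto)
  define r where "r = sqrt (a12\<^sup>2 + d\<^sup>2)"
  have "0 < r"
    using assms(1) by (simp add: r_def add_pos_nonneg)
  have cos_half: "cos (\<theta> / 2) = d / r" and sin_half: "sin (\<theta> / 2) = a12 / r"
    using rectangle_half_angle[OF assms(1,2)] by (simp_all add: assms(10) F vertices r_def)
  have "a12 < d"
  proof -
    have "0 \<le> \<theta>"
      by (simp add: assms(10) angle_nonneg)
    then have "0 < cos \<theta>"
      using assms(11) by (intro cos_gt_zero_pi) auto
    also have "cos \<theta> = (d\<^sup>2 - a12\<^sup>2) / r\<^sup>2"
      using cos_double[of "\<theta> / 2"] by (simp add: cos_half sin_half power_divide diff_divide_distrib)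
    finally have "a12\<^sup>2 < d\<^sup>2"
      by (simp add: zero_less_divide_iff)
    then show ?thesis
      using assms(2) by (simp add: power_less_imp_less_base)
  qed
  have "2 * dist A1' F12 + 2 * dist A3 F34 + w \<theta> * dist F12 F34 = 4 * a12 * cos (\<theta> / 2)"
    using rectangle_orthocenter_identity[OF assms(1) \<open>a12 < d\<close>]
      rectangle_orthocenters[of a12 d F12 F34] assms(1,2,12-14)
    by (simp add: vertices F cos_half sin_half r_def)
  moreover have "2 * dist A1' O12 + 2 * dist A3 O34 + dist O12 O34
      = a12 * (sqrt 3 + cos (\<theta> / 2) / sin (\<theta> / 2))"
  proof -
    have "d \<le> sqrt 3 * d"
      using assms(2) by simp
    with \<open>a12 < d\<close> have "a12 \<le> sqrt 3 * d"
      by linarith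
    then show ?thesis
      using rectangle_steiner_identity[OF assms(1)] rectangle_steiner_points[of a12 d O12 O34]
        assms(1,2,15-18) \<open>0 < r\<close>
      by (simp add: vertices cos_half sin_half field_simps)
  qed
  ultimately show ?thesis ..
qed

end
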